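(* Consider the multiobjective optimal control setting, Assumption A, Assumption B and Algorithm 1 described in the context, and let $x_0\in\mathbb{X}_N$. Then the MPC feedback $\mu^N:\mathbb{N}_0\times\mathbb{X}\to\mathbb{U}$ defined by Algorithm 1 has the infinite-horizon averaged closed-loop performance \[\bar J_i^\infty(x_0,\mu^N):=\limsup_{K\to\infty}\frac1K\sum_{k=0}^{K-1}\ell_i\big(x_\mu(k,x_0),\mu^N(k,x_\mu(k,x_0))\big)\le\ell_i(x^e,u^e)\] for all objectives $i\in\{2,\dots,s\}$.
   Context: Let $f:\mathbb{R}^n\times\mathbb{R}^m\to\mathbb{R}^n$ be continuous and consider $x(k+1)=f(x(k),u(k))$, $x(0)=x_0$; $x_{\mathbf{u}}(k,x_0)$ denotes the solution for control sequence $\mathbf u$. Let $\mathbb{X}\subseteq\mathbb{R}^n$, $\mathbb{U}\subseteq\mathbb{R}^m$, $\mathbb{X}_0\subseteq\mathbb{X}$ be nonempty; horizons $N\ge2$, objectives $s\ge2$. $\mathbb{U}^N(x_0)$ is the set of $\mathbf{u}\in\mathbb{U}^N$ with $x_{\mathbf{u}}(k,x_0)\in\mathbb{X}$ for $k=1,\dots,N-1$ and $x_{\mathbf{u}}(N,x_0)\in\mathbb{X}_0$; $\mathbb{X}_N=\{x_0\in\mathbb{X}:\mathbb{U}^N(x_0)\neq\emptyset\}$. With stage costs $\ell_i:\mathbb{X}\times\mathbb{U}\to\mathbb{R}$ ($i=1,\dots,s$) and continuous $F_1:\mathbb{X}_0\to\mathbb{R}_{\ge0}$: $J_1^N(x_0,\mathbf{u})=\sum_{k=0}^{N-1}\ell_1(x_{\mathbf{u}}(k,x_0),u(k))+F_1(x_{\mathbf{u}}(N,x_0))$,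 $J_i^N(x_0,\mathbf{u})=\sum_{k=0}^{N-1}\ell_i(x_{\mathbf{u}}(k,x_0),u(k))$ for $i\ge2$. $\mathbf{u}^\star\in\mathbb{U}^N(x_0)$ is efficient if no $\mathbf{u}\in\mathbb{U}^N(x_0)$ satisfies $J_i^N(x_0,\mathbf{u})\le J_i^N(x_0,\mathbf{u}^\star)$ for all $i$ with strict inequality for some $i$; $\mathbb{U}^N_{\mathcal P}(x_0)$ is the efficient set. $\mathcal{J}^N(x_0)$ is the set of vectors $(J_i^N(x_0,\mathbf u))_{i=1}^s$, $\mathbf u\in\mathbb{U}^N(x_0)$, $\mathcal{J}^N_{\mathcal P}(x_0)$ the subset for efficient $\mathbf u$; external stability means every $y\in\mathcal{J}^N(x_0)$ dominates componentwise some $y_{\mathcal P}\in\mathcal{J}^N_{\mathcal P}(x_0)$. $\mathcal K_\infty$: continuous strictly increasing unbounded functions $\mathbb{R}_{\ge0}\to\mathbb{R}_{\ge0}$ vanishing at $0$. Assumption A: (i) $(x^e,u^e)\in\mathbb{X}\times\mathbb{U}$ with $f(x^e,u^e)=x^e$; (ii) $\lambda_1:\mathbb{X}\to\mathbb{R}$ bounded below, $\lambda_1(x^e)=0$, $\alpha_{\ell,1}\in\mathcal K_\infty$ with $\ell_1(x,u)-\ell_1(x^e,u^e)+\lambda_1(x)-\lambda_1(f(x,u))\ge\alpha_{\ell,1}(\|x-x^e\|+\|u-u^e\|)$ on $\mathbb{X}\times\mathbb{U}$; (iii) all $\ell_i$ continuous; (iv) $x^e\in\mathbb{X}_0$ and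 $\kappa:\mathbb{X}_0\to\mathbb{U}$ with $f(x,\kappa(x))\in\mathbb{X}_0$ and $F_1(f(x,\kappa(x)))+\ell_1(x,\kappa(x))\le F_1(x)+\ell_1(x^e,u^e)$ for all $x\in\mathbb{X}_0$; (v) $\mathcal{J}^N_{\mathcal P}(x)$ externally stable for $\mathcal{J}^N(x)$ for all $x\in\mathbb{X}_N$. Assumption B: there are $\gamma_{F_1},\gamma_{\lambda_1}\in\mathcal K_\infty$ with (i) $F_1(x^e)=0$ and $|F_1(x)-F_1(x^e)|\le\gamma_{F_1}(\|x-x^e\|)$ for all $x\in\mathbb{X}_0$; (ii) $|\lambda_1(x)-\lambda_1(x^e)|\le\gamma_{\lambda_1}(\|x-x^e\|)$ for all $x\in\mathbb{X}$. Algorithm 1 ($k\in\mathbb N_0$): $x(0)=x_0$, choose any $\mathbf{u}^\star_{x(0)}\in\mathbb{U}^N_{\mathcal P}(x(0))$; for $k\ge1$ choose $\mathbf{u}^\star_{x(k)}\in\mathbb{U}^N_{\mathcal P}(x(k))$ with $J_1^N(x(k),\mathbf{u}^\star_{x(k)})\le J_1^N(x(k),\mathbf{u}_{x(k)})$, where $\mathbf{u}_{x(k+1)}:=(u^\star_{x(k)}(1),\dots,u^\star_{x(k)}(N-1),\kappa(x_{\mathbf{u}^\star_{x(k)}}(N,x(k))))$. Feedback $\mu^N(k,x(k)):=u^\star_{x(k)}(0)$, $x(k+1)=f(x(k),\mu^N(k,x(k)))$, $x_\mu(k,x_0):=x(k)$. The statement applies to any admissible choices of efficient solutions. *)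

theory Defs
  imports "HOL-Analysis.Analysis"
begin

definition Kinf :: "(real \<Rightarrow> real) \<Rightarrow> bool" where
  "Kinf \<alpha> \<longleftrightarrow> continuous_on {0..} \<alpha> \<and> strict_mono_on {0..} \<alpha> \<and> \<alpha> 0 = 0
     \<and> (\<forall>x\<ge>0. \<alpha> x \<ge> 0) \<and> (\<forall>M. \<exists>r\<ge>0. \<alpha> r > M)"

primrec traj :: "('x \<Rightarrow> 'u \<Rightarrow> 'x) \<Rightarrow> 'x \<Rightarrow> 'u list \<Rightarrow> nat \<Rightarrow> 'x" where
  "traj f x0 us 0 = x0"
| "traj f x0 us (Suc k) = f (traj f x0 us k) (us ! k)"

definition admissible ::
  "('x \<Rightarrow> 'u \<Rightarrow> 'x) \<Rightarrow> 'x set \<Rightarrow> 'u set \<Rightarrow> 'x set \<Rightarrow> nat \<Rightarrow> 'x \<Rightarrow> 'u list set" where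
  "admissible f X U X0 N x0 = {us. length us = N \<and> set us \<subseteq> U
      \<and> (\<forall>k\<in>{1..N-1}. traj f x0 us k \<in> X) \<and> traj f x0 us N \<in> X0}"

definition feasible_set ::
  "('x \<Rightarrow> 'u \<Rightarrow> 'x) \<Rightarrow> 'x set \<Rightarrow> 'u set \<Rightarrow> 'x set \<Rightarrow> nat \<Rightarrow> 'x set" where
  "feasible_set f X U X0 N = {x0 \<in> X. admissible f X U X0 N x0 \<noteq> {}}"

definition Jcost ::
  "('x \<Rightarrow> 'u \<Rightarrow> 'x) \<Rightarrow> (nat \<Rightarrow> 'x \<Rightarrow> 'u \<Rightarrow> real) \<Rightarrow> ('x \<Rightarrow> real) \<Rightarrow> nat \<Rightarrow> nat
     \<Rightarrow> 'x \<Rightarrow> 'u list \<Rightarrow> real" where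
  "Jcost f ell F1 N i x0 us = (\<Sum>k<N. ell i (traj f x0 us k) (us ! k))
      + (if i = 1 then F1 (traj f x0 us N) else 0)"

definition efficient ::
  "('x \<Rightarrow> 'u \<Rightarrow> 'x) \<Rightarrow> 'x set \<Rightarrow> 'u set \<Rightarrow> 'x set \<Rightarrow> (nat \<Rightarrow> 'x \<Rightarrow> 'u \<Rightarrow> real)
     \<Rightarrow> ('x \<Rightarrow> real) \<Rightarrow> nat \<Rightarrow> nat \<Rightarrow> 'x \<Rightarrow> 'u list set" where
  "efficient f X U X0 ell F1 s N x0 = {us \<in> admissible f X U X0 N x0.
      \<not> (\<exists>v \<in> admissible f X U X0 N x0.
           (\<forall>i\<in>{1..s}. Jcost f ell F1 N i x0 v \<le> Jcost f ell F1 N i x0 us)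
         \<and> (\<exists>i\<in>{1..s}. Jcost f ell F1 N i x0 v < Jcost f ell F1 N i x0 us))}"

definition externally_stable ::
  "('x \<Rightarrow> 'u \<Rightarrow> 'x) \<Rightarrow> 'x set \<Rightarrow> 'u set \<Rightarrow> 'x set \<Rightarrow> (nat \<Rightarrow> 'x \<Rightarrow> 'u \<Rightarrow> real)
     \<Rightarrow> ('x \<Rightarrow> real) \<Rightarrow> nat \<Rightarrow> nat \<Rightarrow> 'x \<Rightarrow> bool" where
  "externally_stable f X U X0 ell F1 s N x0 \<longleftrightarrow>
     (\<forall>us \<in> admissible f X U X0 N x0. \<exists>ue \<in> efficient f X U X0 ell F1 s N x0.
        \<forall>i\<in>{1..s}. Jcost f ell F1 N i x0 ue \<le> Jcost f ell F1 N i x0 us)"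

definition shifted_candidate ::
  "('x \<Rightarrow> 'u \<Rightarrow> 'x) \<Rightarrow> ('x \<Rightarrow> 'u) \<Rightarrow> nat \<Rightarrow> 'x \<Rightarrow> 'u list \<Rightarrow> 'u list" where
  "shifted_candidate f kappa N x us = tl us @ [kappa (traj f x us N)]"

end

theory Submission
  imports Defs
begin

text \<open>
  The optimal value V k of the first objective at the closed-loop state xs k, rotated by the
  storage function lam1 of strict dissipativity, is a Lyapunov function for the closed loop.
  Comparing with the shifted candidate and using the terminal condition on F1 gives
  V (k+1) \<le> V k - ell 1 (xs k) (u k) + ell 1 xe ue, and strict dissipativity turns this into a
  decrease of V k + lam1 (xs k) by at least alpha1 (norm (xs k - xe) + norm (u k - ue)).
  The rotated value is bounded below, so these decrements are summable and the closed loop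
  converges to (xe, ue). By continuity ell i converges to ell i xe ue along the closed loop,
  and so do its Cesaro means.
\<close>

lemma cesaro_mean_tendsto:
  fixes a :: "nat \<Rightarrow> real"
  assumes "a \<longlonglongrightarrow> L"
  shows "(\<lambda>K. (1 / real K) * (\<Sum>k<K. a k)) \<longlonglongrightarrow> L"
proof (rule LIMSEQ_I)
  fix e :: real assume "0 < e"
  then obtain M where M: "\<And>n. n \<ge> M \<Longrightarrow> \<bar>a n - L\<bar> < e / 2"
    using LIMSEQ_D[OF assms, of "e / 2"] by auto
  define C where "C = (\<Sum>k<M. \<bar>a k - L\<bar>)"
  obtain K0 :: nat where K0: "2 * C / e < real K0"
    using reals_Archimedean2 by blast
  have "\<bar>(1 / real n) * (\<Sum>k<n. a k) - L\<bar> < e" if n: "max (Suc M) K0 \<le> n" for n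
  proof -
    have n_pos: "0 < real n" and "M \<le> n" using n by auto
    then have lessThan_split: "{..<n} = {..<M} \<union> {M..<n}" by auto
    have "\<bar>\<Sum>k<n. a k - L\<bar> \<le> (\<Sum>k<n. \<bar>a k - L\<bar>)" by (rule sum_abs)
    also have "\<dots> = C + (\<Sum>k\<in>{M..<n}. \<bar>a k - L\<bar>)"
      unfolding C_def lessThan_split by (subst sum.union_disjoint) auto
    also have "(\<Sum>k\<in>{M..<n}. \<bar>a k - L\<bar>) \<le> (\<Sum>k\<in>{M..<n}. e / 2)"
      using M by (intro sum_mono) (simp add: less_imp_le)
    also have "\<dots> \<le> real n * (e / 2)" using \<open>0 < e\<close> by simp
    also have "C < real n * (e / 2)"
    proof -
      have "2 * C / e < real n" using K0 n by linarith
      then show ?thesis using \<open>0 < e\<close> by (simp add: field_simps)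
    qed
    finally have "\<bar>\<Sum>k<n. a k - L\<bar> < e * real n" by simp
    moreover have "(1 / real n) * (\<Sum>k<n. a k) - L = (\<Sum>k<n. a k - L) / real n"
      using n_pos by (simp add: sum_subtractf field_simps)
    ultimately show ?thesis using n_pos by (simp add: field_simps)
  qed
  then show "\<exists>n0. \<forall>n\<ge>n0. norm ((1 / real n) * (\<Sum>k<n. a k) - L) < e"
    unfolding real_norm_def by blast
qed

lemma Kinf_nonneg: "Kinf \<alpha> \<Longrightarrow> 0 \<le> t \<Longrightarrow> 0 \<le> \<alpha> t"
  unfolding Kinf_def by auto

lemma Kinf_tendsto_zeroD:
  assumes "Kinf \<alpha>" and nonneg: "\<And>k. 0 \<le> r k" and "(\<lambda>k. \<alpha> (r k)) \<longlonglongrightarrow> 0"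
  shows "r \<longlonglongrightarrow> 0"
proof (rule LIMSEQ_I)
  fix e :: real assume "0 < e"
  have mono: "strict_mono_on {0..} \<alpha>" and "\<alpha> 0 = 0" using assms(1) unfolding Kinf_def by auto
  then have "0 < \<alpha> e" using strict_mono_onD[OF mono, of 0 e] \<open>0 < e\<close> by auto
  then obtain M where M: "\<And>n. n \<ge> M \<Longrightarrow> \<bar>\<alpha> (r n)\<bar> < \<alpha> e"
    using LIMSEQ_D[OF assms(3)] by fastforce
  have "r n < e" if "M \<le> n" for n
  proof (rule ccontr)
    assume "\<not> r n < e"
    then have "\<alpha> e \<le> \<alpha> (r n)" using strict_mono_on_leD[OF mono] \<open>0 < e\<close> by auto
    with M[OF that] show False by simp
  qed
  then show "\<exists>n0. \<forall>n\<ge>n0. norm (r n - 0) < e" using nonneg by auto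
qed

lemma summable_of_decrease_bounded_below:
  fixes W a :: "nat \<Rightarrow> real"
  assumes decr: "\<And>k. W (Suc k) \<le> W k - a k" and "\<And>k. 0 \<le> a k" and "\<And>k. c \<le> W k"
  shows "summable a"
proof (rule summableI_nonneg_bounded)
  have partial_sums: "(\<Sum>k<K. a k) \<le> W 0 - W K" for K
  proof (induction K)
    case (Suc K)
    then show ?case using decr[of K] by simp
  qed simp
  then show "(\<Sum>k<K. a k) \<le> W 0 - c" for K
    using partial_sums[of K] assms(3)[of K] by linarith
qed fact

lemma nth_tl_append: "Suc j < length us \<Longrightarrow> (tl us @ [v]) ! j = us ! Suc j"
  by (cases us) (auto simp: nth_append)

lemma traj_tl_append:
  assumes "j < length us"
  shows "traj f (f x (hd us)) (tl us @ [v]) j = traj f x us (Suc j)"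
  using assms
proof (induction j)
  case 0
  then show ?case by (simp add: hd_conv_nth)
next
  case (Suc j)
  then show ?case by (simp add: nth_tl_append)
qed

lemma traj_tl_append_length:
  assumes "us \<noteq> []"
  shows "traj f (f x (hd us)) (tl us @ [v]) (length us) = f (traj f x us (length us)) v"
proof -
  obtain m where m: "length us = Suc m" using assms by (cases us) auto
  then show ?thesis using traj_tl_append[of m us f x v] by (simp add: nth_append)
qed

lemma sum_traj_tl_append:
  fixes g :: "'x \<Rightarrow> 'u \<Rightarrow> 'a::ab_group_add"
  assumes "us \<noteq> []"
  shows "(\<Sum>j<length us. g (traj f (f x (hd us)) (tl us @ [v]) j) ((tl us @ [v]) ! j))
    = (\<Sum>j<length us. g (traj f x us j) (us ! j)) - g x (hd us) + g (traj f x us (length us)) v"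
proof -
  obtain m where m: "length us = Suc m" using assms by (cases us) auto
  have "(\<Sum>j<m. g (traj f (f x (hd us)) (tl us @ [v]) j) ((tl us @ [v]) ! j))
      = (\<Sum>j<m. g (traj f x us (Suc j)) (us ! Suc j))"
    using m by (intro sum.cong) (simp_all add: traj_tl_append nth_tl_append)
  then have "(\<Sum>j<Suc m. g (traj f (f x (hd us)) (tl us @ [v]) j) ((tl us @ [v]) ! j))
      = (\<Sum>j<m. g (traj f x us (Suc j)) (us ! Suc j)) + g (traj f x us (Suc m)) v"
    using m traj_tl_append[of m us f x v] by (simp add: nth_append)
  also have "\<dots> = (\<Sum>j<Suc m. g (traj f x us j) (us ! j)) - g x (hd us) + g (traj f x us (Suc m)) v"
    unfolding sum.lessThan_Suc_shift by (simp add: hd_conv_nth assms)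
  finally show ?thesis unfolding m .
qed

lemma admissible_traj_mem:
  assumes "us \<in> admissible f X U X0 N x" "x \<in> X" "X0 \<subseteq> X" "j \<le> N"
  shows "traj f x us j \<in> X"
  using assms unfolding admissible_def
  by (cases "j = 0 \<or> j = N") (auto simp: Suc_le_eq)

lemma admissible_nth_mem:
  assumes "us \<in> admissible f X U X0 N x" "j < N"
  shows "us ! j \<in> U"
  using assms unfolding admissible_def by auto

lemma Jcost_shifted_candidate_le:
  assumes "length us = N" "0 < N" "traj f x us N \<in> X0"
    and "\<forall>x\<in>X0. F1 (f x (kappa x)) + ell 1 x (kappa x) \<le> F1 x + ell 1 xe ue"
  shows "Jcost f ell F1 N 1 (f x (hd us)) (shifted_candidate f kappa N x us)
    \<le> Jcost f ell F1 N 1 x us - ell 1 x (hd us) + ell 1 xe ue"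
proof -
  have "us \<noteq> []" using assms(1,2) by auto
  with assms show ?thesis
    unfolding Jcost_def shifted_candidate_def
    using sum_traj_tl_append[of us "ell 1" f x "kappa (traj f x us N)"]
      traj_tl_append_length[of us f x "kappa (traj f x us N)"]
    by force
qed

lemma Jcost_plus_storage_ge:
  assumes us: "us \<in> admissible f X U X0 N x" and "x \<in> X" "X0 \<subseteq> X"
    and lam_bounded: "\<forall>x\<in>X. c \<le> lam x" and F1_nonneg: "\<forall>x\<in>X0. 0 \<le> F1 x"
    and dissipative: "\<forall>x\<in>X. \<forall>u\<in>U. ell 1 xe ue + lam (f x u) - lam x \<le> ell 1 x u"
  shows "real N * ell 1 xe ue + c \<le> Jcost f ell F1 N 1 x us + lam x"
proof -
  let ?x = "traj f x us"
  have "(\<Sum>j<N. ell 1 xe ue + (lam (?x (Suc j)) - lam (?x j))) \<le> (\<Sum>j<N. ell 1 (?x j) (us ! j))"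
  proof (rule sum_mono)
    fix j assume "j \<in> {..<N}"
    then have "?x j \<in> X" and "us ! j \<in> U"
      using admissible_traj_mem[OF us \<open>x \<in> X\<close> \<open>X0 \<subseteq> X\<close>] admissible_nth_mem[OF us] by auto
    then show "ell 1 xe ue + (lam (?x (Suc j)) - lam (?x j)) \<le> ell 1 (?x j) (us ! j)"
      using dissipative by fastforce
  qed
  moreover have "(\<Sum>j<N. ell 1 xe ue + (lam (?x (Suc j)) - lam (?x j)))
      = real N * ell 1 xe ue + lam (?x N) - lam x"
    using sum_lessThan_telescope[of "\<lambda>j. lam (?x j)" N] by (simp only: sum.distrib) simp
  moreover have "c \<le> lam (?x N)" and "0 \<le> F1 (?x N)"
    using us assms(3) lam_bounded F1_nonneg unfolding admissible_def by auto
  ultimately show ?thesis unfolding Jcost_def by simp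
qed

lemma closed_loop_mem:
  assumes "0 < N" "X0 \<subseteq> X" "xs 0 \<in> X"
    and adm: "\<forall>k. useq k \<in> admissible f X U X0 N (xs k)"
    and step: "\<forall>k. xs (Suc k) = f (xs k) (hd (useq k))"
  shows "xs k \<in> X" and "hd (useq k) \<in> U"
proof -
  have hd_eq: "hd (useq k) = useq k ! 0" for k
  proof -
    have "length (useq k) = N" using adm unfolding admissible_def by blast
    then show ?thesis using \<open>0 < N\<close> by (auto simp: hd_conv_nth)
  qed
  then show "hd (useq k) \<in> U"
    using admissible_nth_mem[OF adm[rule_format] \<open>0 < N\<close>] by simp
  show "xs k \<in> X"
  proof (induction k)
    case (Suc k)
    then show ?case
      using admissible_traj_mem[OF adm[rule_format] Suc \<open>X0 \<subseteq> X\<close>, of 1] step hd_eq \<open>0 < N\<close>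
      by simp
  qed (fact \<open>xs 0 \<in> X\<close>)
qed

lemma closed_loop_tendsto_equilibrium:
  fixes xs :: "nat \<Rightarrow> 'x::real_normed_vector" and useq :: "nat \<Rightarrow> 'u::real_normed_vector list"
  assumes "0 < N" "X0 \<subseteq> X"
    and F1_nonneg: "\<forall>x\<in>X0. 0 \<le> F1 x"
    and lam_bounded: "\<forall>x\<in>X. c \<le> lam x"
    and "Kinf \<alpha>"
    and strictly_dissipative: "\<forall>x\<in>X. \<forall>u\<in>U.
      \<alpha> (norm (x - xe) + norm (u - ue)) \<le> ell 1 x u - ell 1 xe ue + lam x - lam (f x u)"
    and terminal: "\<forall>x\<in>X0. F1 (f x (kappa x)) + ell 1 x (kappa x) \<le> F1 x + ell 1 xe ue"
    and "xs 0 \<in> X"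
    and adm: "\<forall>k. useq k \<in> admissible f X U X0 N (xs k)"
    and cand: "\<forall>k. Jcost f ell F1 N 1 (xs (Suc k)) (useq (Suc k))
      \<le> Jcost f ell F1 N 1 (xs (Suc k)) (shifted_candidate f kappa N (xs k) (useq k))"
    and step: "\<forall>k. xs (Suc k) = f (xs k) (hd (useq k))"
  shows "xs \<longlonglongrightarrow> xe" and "(\<lambda>k. hd (useq k)) \<longlonglongrightarrow> ue"
proof -
  have len: "length (useq k) = N" and terminal_mem: "traj f (xs k) (useq k) N \<in> X0" for k
    using adm unfolding admissible_def by auto
  note xs_mem = closed_loop_mem(1)[OF \<open>0 < N\<close> \<open>X0 \<subseteq> X\<close> \<open>xs 0 \<in> X\<close> adm step]
  note hd_mem = closed_loop_mem(2)[OF \<open>0 < N\<close> \<open>X0 \<subseteq> X\<close> \<open>xs 0 \<in> X\<close> adm step]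
  define W where "W k = Jcost f ell F1 N 1 (xs k) (useq k) + lam (xs k)" for k
  define r where "r k = norm (xs k - xe) + norm (hd (useq k) - ue)" for k
  have W_decr: "W (Suc k) \<le> W k - \<alpha> (r k)" for k
  proof -
    have "Jcost f ell F1 N 1 (xs (Suc k)) (useq (Suc k))
        \<le> Jcost f ell F1 N 1 (xs (Suc k)) (shifted_candidate f kappa N (xs k) (useq k))"
      using cand by blast
    also have "\<dots> \<le> Jcost f ell F1 N 1 (xs k) (useq k) - ell 1 (xs k) (hd (useq k)) + ell 1 xe ue"
      using Jcost_shifted_candidate_le[where ell = ell, OF len[of k] \<open>0 < N\<close> terminal_mem[of k] terminal]
        step by simp
    finally have "Jcost f ell F1 N 1 (xs (Suc k)) (useq (Suc k))
        \<le> Jcost f ell F1 N 1 (xs k) (useq k) - ell 1 (xs k) (hd (useq k)) + ell 1 xe ue" .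
    moreover have "\<alpha> (r k) \<le> ell 1 (xs k) (hd (useq k)) - ell 1 xe ue + lam (xs k) - lam (xs (Suc k))"
      using strictly_dissipative xs_mem[of k] hd_mem[of k] step unfolding r_def by simp
    ultimately show ?thesis unfolding W_def by simp
  qed
  have "real N * ell 1 xe ue + c \<le> W k" for k
    unfolding W_def
  proof (rule Jcost_plus_storage_ge[OF _ xs_mem \<open>X0 \<subseteq> X\<close> lam_bounded F1_nonneg])
    show "useq k \<in> admissible f X U X0 N (xs k)" using adm by blast
    have "0 \<le> \<alpha> (norm (x - xe) + norm (u - ue))" for x u
      by (simp add: Kinf_nonneg[OF \<open>Kinf \<alpha>\<close>])
    with strictly_dissipative
    show "\<forall>x\<in>X. \<forall>u\<in>U. ell 1 xe ue + lam (f x u) - lam x \<le> ell 1 x u"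
      by (smt (verit))
  qed
  then have "summable (\<lambda>k. \<alpha> (r k))"
    by (intro summable_of_decrease_bounded_below[of W _ "real N * ell 1 xe ue + c"] W_decr)
      (simp_all add: r_def Kinf_nonneg[OF \<open>Kinf \<alpha>\<close>])
  moreover have r_nonneg: "0 \<le> r k" for k
    by (simp add: r_def)
  ultimately have "r \<longlonglongrightarrow> 0"
    using Kinf_tendsto_zeroD[OF \<open>Kinf \<alpha>\<close>] summable_LIMSEQ_zero by blast
  have "(\<lambda>k. xs k - xe) \<longlonglongrightarrow> 0" and "(\<lambda>k. hd (useq k) - ue) \<longlonglongrightarrow> 0"
    by (intro Lim_null_comparison[OF _ \<open>r \<longlonglongrightarrow> 0\<close>] always_eventually allI; simp add: r_def)+
  then show "xs \<longlonglongrightarrow> xe" and "(\<lambda>k. hd (useq k)) \<longlonglongrightarrow> ue"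
    by (simp_all add: LIM_zero_iff)
qed

theorem theorem4p8:
  fixes f :: "real^'n \<Rightarrow> real^'m \<Rightarrow> real^'n"
    and X X0 :: "(real^'n) set" and U :: "(real^'m) set"
    and N s :: nat
    and ell :: "nat \<Rightarrow> real^'n \<Rightarrow> real^'m \<Rightarrow> real"
    and F1 lam1 :: "real^'n \<Rightarrow> real"
    and xe :: "real^'n" and ue :: "real^'m"
    and alpha1 gamF gamL :: "real \<Rightarrow> real"
    and kappa :: "real^'n \<Rightarrow> real^'m"
    and x0 :: "real^'n"
    and xs :: "nat \<Rightarrow> real^'n"
    and useq :: "nat \<Rightarrow> (real^'m) list"
  assumes f_cont: "continuous_on UNIV (\<lambda>(x, u). f x u)"
    and X_ne: "X \<noteq> {}" and U_ne: "U \<noteq> {}" and X0_ne: "X0 \<noteq> {}" and X0_sub: "X0 \<subseteq> X"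
    and N_ge: "N \<ge> 2" and s_ge: "s \<ge> 2"
    and F1_cont: "continuous_on X0 F1" and F1_nonneg: "\<forall>x\<in>X0. F1 x \<ge> 0"
    \<comment> \<open>Assumption A\<close>
    and A1: "xe \<in> X" "ue \<in> U" "f xe ue = xe"
    and A2: "\<exists>c. \<forall>x\<in>X. c \<le> lam1 x" "lam1 xe = 0" "Kinf alpha1"
      "\<forall>x\<in>X. \<forall>u\<in>U. ell 1 x u - ell 1 xe ue + lam1 x - lam1 (f x u) \<ge> alpha1 (norm (x - xe) + norm (u - ue))"
    and A3: "\<forall>i\<in>{1..s}. continuous_on (X \<times> U) (\<lambda>(x, u). ell i x u)"
    and A4: "xe \<in> X0"
      "\<forall>x\<in>X0. kappa x \<in> U \<and> f x (kappa x) \<in> X0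
         \<and> F1 (f x (kappa x)) + ell 1 x (kappa x) \<le> F1 x + ell 1 xe ue"
    and A5: "\<forall>x\<in>feasible_set f X U X0 N. externally_stable f X U X0 ell F1 s N x"
    \<comment> \<open>Assumption B\<close>
    and B: "Kinf gamF" "Kinf gamL" "F1 xe = 0"
      "\<forall>x\<in>X0. \<bar>F1 x - F1 xe\<bar> \<le> gamF (norm (x - xe))"
      "\<forall>x\<in>X. \<bar>lam1 x - lam1 xe\<bar> \<le> gamL (norm (x - xe))"
    \<comment> \<open>initial state\<close>
    and x0: "x0 \<in> feasible_set f X U X0 N"
    \<comment> \<open>any run of Algorithm 1\<close>
    and alg_init: "xs 0 = x0"
    and alg_eff: "\<forall>k. useq k \<in> efficient f X U X0 ell F1 s N (xs k)"
    and alg_cand: "\<forall>k. Jcost f ell F1 N 1 (xs (Suc k)) (useq (Suc k))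
        \<le> Jcost f ell F1 N 1 (xs (Suc k)) (shifted_candidate f kappa N (xs k) (useq k))"
    and alg_step: "\<forall>k. xs (Suc k) = f (xs k) (hd (useq k))"
  shows "\<forall>i\<in>{2..s}.
    limsup (\<lambda>K. ereal ((1 / real K) * (\<Sum>k<K. ell i (xs k) (hd (useq k)))))
      \<le> ereal (ell i xe ue)"
proof
  fix i assume i: "i \<in> {2..s}"
  obtain c where lam_bounded: "\<forall>x\<in>X. c \<le> lam1 x" using A2(1) by blast
  have "0 < N" using N_ge by simp
  have xs0: "xs 0 \<in> X" using x0 alg_init unfolding feasible_set_def by simp
  have adm: "\<forall>k. useq k \<in> admissible f X U X0 N (xs k)"
    using alg_eff unfolding efficient_def by blast
  have terminal: "\<forall>x\<in>X0. F1 (f x (kappa x)) + ell 1 x (kappa x) \<le> F1 x + ell 1 xe ue"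
    using A4(2) by blast
  note closed_loop = \<open>0 < N\<close> X0_sub xs0 adm alg_step
  have "(\<lambda>k. (xs k, hd (useq k))) \<longlonglongrightarrow> (xe, ue)"
    using closed_loop_tendsto_equilibrium[OF \<open>0 < N\<close> X0_sub F1_nonneg lam_bounded A2(3,4)
        terminal xs0 adm alg_cand alg_step]
    by (rule tendsto_Pair)
  then have "(\<lambda>k. ell i (xs k) (hd (useq k))) \<longlonglongrightarrow> ell i xe ue"
    using continuous_on_tendsto_compose[OF A3[rule_format], of i "\<lambda>k. (xs k, hd (useq k))" "(xe, ue)"]
      i A1 closed_loop_mem[OF closed_loop] by simp
  then have "(\<lambda>K. ereal ((1 / real K) * (\<Sum>k<K. ell i (xs k) (hd (useq k))))) \<longlonglongrightarrow> ereal (ell i xe ue)"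
    by (intro tendsto_ereal cesaro_mean_tendsto)
  then show "limsup (\<lambda>K. ereal ((1 / real K) * (\<Sum>k<K. ell i (xs k) (hd (useq k)))))
      \<le> ereal (ell i xe ue)"
    by (intro eq_refl lim_imp_Limsup) simp_all
qed

end
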